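(* Let $G=(V,E)$ be a countable graph with uniformly bounded degrees, $\alpha\in[0,1)$, and let $\{N_t\}_{t\ge0}$ be the weakly reinforced Pólya urn process on $G$ with exponent $\alpha$, $X_t=N_t/t$. Then for every $e\in E$, $\mathbb P\big(\limsup_{t\to\infty}X_t(e)\le 2\big)=1$.
   Context: $E_v=\{e\in E: v\in e\}$. The process: $\{P_v\}_{v\in V}$ i.i.d. Poisson point processes on $[0,\infty)\times[0,1]$ with intensity 1; initially $N_0(e)=1$ for all $e$. With $\mathrm{pol}_{v,e}(N)=N(e)^\alpha/\sum_{e'\in E_v}N(e')^\alpha$ and an enumeration $E_v=\{e_1,\dots,e_{\deg(v)}\}$, at each atom $(t,u)$ of $P_v$ the weight of $e_i$ is increased by 1 if $u\in(\sum_{j<i}\mathrm{pol}_{v,e_j}(N_t),\sum_{j\le i}\mathrm{pol}_{v,e_j}(N_t)]$ (weights just before $t$); no other changes occur. *)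

theory Defs
  imports "HOL-Probability.Probability"
begin

definition edges_at :: "'v set set \<Rightarrow> 'v \<Rightarrow> 'v set set" where
  "edges_at E v = {e \<in> E. v \<in> e}"

definition countable_graph_bounded_degree :: "'v set \<Rightarrow> 'v set set \<Rightarrow> bool" where
  "countable_graph_bounded_degree V E \<longleftrightarrow>
     countable V \<and> (\<forall>e\<in>E. e \<subseteq> V \<and> card e = 2) \<and>
     (\<exists>D::nat. \<forall>v\<in>V. finite (edges_at E v) \<and> card (edges_at E v) \<le> D)"

definition edge_enumeration :: "'v set \<Rightarrow> 'v set set \<Rightarrow> ('v \<Rightarrow> nat \<Rightarrow> 'v set) \<Rightarrow> bool" where
  "edge_enumeration V E enum \<longleftrightarrow>
     (\<forall>v\<in>V. bij_betw (enum v) {..<card (edges_at E v)} (edges_at E v))"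

definition pol :: "real \<Rightarrow> 'v set set \<Rightarrow> ('v set \<Rightarrow> nat) \<Rightarrow> 'v \<Rightarrow> 'v set \<Rightarrow> real" where
  "pol \<alpha> E N v e = real (N e) powr \<alpha> / (\<Sum>e'\<in>edges_at E v. real (N e') powr \<alpha>)"

definition sel_interval ::
  "real \<Rightarrow> 'v set set \<Rightarrow> ('v \<Rightarrow> nat \<Rightarrow> 'v set) \<Rightarrow> ('v set \<Rightarrow> nat) \<Rightarrow> 'v \<Rightarrow> 'v set \<Rightarrow> real set" where
  "sel_interval \<alpha> E enum N v e =
     (let i = (THE i. i < card (edges_at E v) \<and> enum v i = e)
      in {(\<Sum>j<i. pol \<alpha> E N v (enum v j)) <.. (\<Sum>j<Suc i. pol \<alpha> E N v (enum v j))})"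

definition ppp_region :: "(real \<times> real) set" where
  "ppp_region = {0..} \<times> {0..1}"

text \<open>A family P of i.i.d. Poisson point processes with intensity 1 (Lebesgue measure) on
  [0,oo) x [0,1], indexed by V, each given by its random set of atoms P v \<omega>.
  Characterised by its finite-dimensional distributions: counts in Borel sets of finite
  measure are a.s. finite and Poisson distributed with mean the Lebesgue measure of the set,
  and counts in pairwise disjoint sets (for the same vertex) resp. for different vertices
  are (jointly) independent.\<close>

definition admissible_set :: "(real \<times> real) set \<Rightarrow> bool" where
  "admissible_set A \<longleftrightarrow> A \<in> sets lborel \<and> A \<subseteq> ppp_region \<and> emeasure lborel A < \<infinity>"

definition iid_poisson_point_processes ::
  "'a measure \<Rightarrow> 'v set \<Rightarrow> ('v \<Rightarrow> 'a \<Rightarrow> (real \<times> real) set) \<Rightarrow> bool" where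
  "iid_poisson_point_processes M V P \<longleftrightarrow>
     prob_space M \<and>
     (\<forall>v\<in>V. \<forall>\<omega>\<in>space M. P v \<omega> \<subseteq> ppp_region) \<and>
     (\<forall>v\<in>V. \<forall>A. admissible_set A \<longrightarrow>
        (AE \<omega> in M. finite (P v \<omega> \<inter> A)) \<and>
        (\<lambda>\<omega>. card (P v \<omega> \<inter> A)) \<in> measurable M (count_space UNIV) \<and>
        (\<forall>k::nat. measure M {\<omega>\<in>space M. card (P v \<omega> \<inter> A) = k}
                   = measure lborel A ^ k / fact k * exp (- measure lborel A))) \<and>
     (\<forall>K. finite K \<longrightarrow> K \<subseteq> V \<times> Collect admissible_set \<longrightarrow>
        (\<forall>(v,A)\<in>K. \<forall>(v',A')\<in>K. v = v' \<and> A \<noteq> A' \<longrightarrow> A \<inter> A' = {}) \<longrightarrow>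
        prob_space.indep_vars M (\<lambda>_. count_space UNIV) (\<lambda>(v,A) \<omega>. card (P v \<omega> \<inter> A)) K)"

text \<open>The weakly reinforced Polya urn process driven by P: almost surely, for all t >= 0 and
  all edges e, N_t(e) = 1 + number of atoms (s,u) of P_v, v an endpoint of e, with 0 < s <= t
  and u in the interval of e at v computed from the weights just before s (left limits).\<close>

definition wrpu_process ::
  "'a measure \<Rightarrow> real \<Rightarrow> 'v set set \<Rightarrow> ('v \<Rightarrow> nat \<Rightarrow> 'v set) \<Rightarrow>
   ('v \<Rightarrow> 'a \<Rightarrow> (real \<times> real) set) \<Rightarrow> (real \<Rightarrow> 'v set \<Rightarrow> 'a \<Rightarrow> nat) \<Rightarrow> bool" where
  "wrpu_process M \<alpha> E enum P N \<longleftrightarrow>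
     (AE \<omega> in M. \<forall>t\<ge>0. \<forall>e\<in>E.
        N t e \<omega> = 1 + card {(v, s, u). v \<in> e \<and> (s, u) \<in> P v \<omega> \<and> 0 < s \<and> s \<le> t \<and>
             u \<in> sel_interval \<alpha> E enum (\<lambda>e'. Lim (at_left s) (\<lambda>r. N r e' \<omega>)) v e})"

end

theory Submission
  imports Defs
begin

text \<open>Every increment of \<open>N(e)\<close> uses an atom of \<open>P\<^sub>a\<close> or \<open>P\<^sub>b\<close> in the strip \<open>(0,t] \<times> [0,1]\<close>,
  where \<open>e = {a, b}\<close>, whatever the selection rule; hence \<open>N\<^sub>t(e) \<le> 1 + #P\<^sub>a(t) + #P\<^sub>b(t)\<close>.
  Each count is Poisson with mean \<open>t\<close>, and a Chernoff bound makes \<open>P(#P\<^sub>v(n) > c n)\<close>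
  geometrically small for every \<open>c > 1\<close>, so by Borel--Cantelli \<open>#P\<^sub>v(t) \<le> c t\<close> eventually,
  almost surely. Letting \<open>c \<down> 1\<close> gives \<open>limsup N\<^sub>t(e)/t \<le> 2\<close>. The selection probabilities
  never enter.\<close>

definition time_strip :: "real \<Rightarrow> (real \<times> real) set" where
  "time_strip t = {0<..t} \<times> {0..1}"

lemma time_strip_mono: "t \<le> t' \<Longrightarrow> time_strip t \<subseteq> time_strip t'"
  by (auto simp: time_strip_def)

lemma admissible_time_strip:
  assumes "0 \<le> t"
  shows "admissible_set (time_strip t)" and "measure lborel (time_strip t) = t"
proof -
  have "time_strip t \<in> sets (borel \<Otimes>\<^sub>M borel)"
    unfolding time_strip_def by (intro pair_measureI) auto
  then have sets: "time_strip t \<in> sets lborel"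
    by (subst (asm) borel_prod) simp
  have "emeasure lborel (time_strip t) = emeasure (lborel \<Otimes>\<^sub>M lborel) ({0<..t} \<times> {0..(1::real)})"
    by (simp add: time_strip_def lborel_prod)
  also have "\<dots> = emeasure lborel {0<..t} * emeasure lborel {0..(1::real)}"
    by (intro sigma_finite_measure.emeasure_pair_measure_Times lborel.sigma_finite_measure_axioms) auto
  finally have "emeasure lborel (time_strip t) = ennreal t"
    using assms by simp
  with sets assms show "admissible_set (time_strip t)" "measure lborel (time_strip t) = t"
    by (auto simp: admissible_set_def time_strip_def ppp_region_def measure_def)
qed

lemma exp_less_powr:
  fixes \<theta> c :: real
  assumes "1 < \<theta>" "\<theta> < c"
  shows "exp (\<theta> - 1) < \<theta> powr c"
proof -
  have "ln (1 / \<theta>) \<le> 1 / \<theta> - 1"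
    using assms by (intro ln_le_minus_one) auto
  then have ln_lower: "(\<theta> - 1) / \<theta> \<le> ln \<theta>"
    using assms by (simp add: ln_div field_simps)
  have "\<theta> - 1 = \<theta> * ((\<theta> - 1) / \<theta>)"
    using assms by simp
  also have "\<dots> < c * ((\<theta> - 1) / \<theta>)"
    using assms by (intro mult_strict_right_mono) auto
  also have "\<dots> \<le> c * ln \<theta>"
    using assms ln_lower by (intro mult_left_mono) auto
  finally have "\<theta> - 1 < c * ln \<theta>" .
  then show ?thesis
    using assms by (simp add: powr_def mult.commute)
qed

lemma poisson_tail_bound:
  fixes X :: "'a \<Rightarrow> nat"
  assumes "prob_space M" and meas: "X \<in> measurable M (count_space UNIV)"
    and pmf: "\<And>k. measure M {\<omega>\<in>space M. X \<omega> = k} = l ^ k / fact k * exp (- l)"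
    and "0 \<le> l" and "1 \<le> \<theta>"
  shows "measure M {\<omega>\<in>space M. c < real (X \<omega>)} \<le> exp (l * (\<theta> - 1)) / \<theta> powr c"
proof -
  interpret prob_space M by fact
  define B where "B j = (if c < real j then {\<omega>\<in>space M. X \<omega> = j} else {})" for j
  have B_sets: "B j \<in> sets M" for j
  proof -
    have "X -` {j} \<inter> space M \<in> sets M"
      by (rule measurable_sets[OF meas]) simp
    then show ?thesis
      by (simp add: B_def vimage_def Int_def conj_commute)
  qed
  have "(\<Union>j. B j) = {\<omega>\<in>space M. c < real (X \<omega>)}"
    by (auto simp: B_def)
  moreover have "disjoint_family B"
    by (auto simp: disjoint_family_on_def B_def)
  ultimately have sums_B: "(\<lambda>j. measure M (B j)) sums measure M {\<omega>\<in>space M. c < real (X \<omega>)}"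
    using measure_UNION[of B M] B_sets by (auto simp: emeasure_eq_measure)
  \<comment> \<open>Markov's inequality for \<open>\<theta>\<^sup>X\<close>, written out on the Poisson series\<close>
  have B_le: "measure M (B j) \<le> (\<theta> * l) ^ j / fact j * (exp (- l) / \<theta> powr c)" for j
  proof (cases "c < real j")
    case True
    have "\<theta> powr c \<le> \<theta> powr real j"
      using True \<open>1 \<le> \<theta>\<close> by (intro powr_mono) auto
    also have "\<dots> = \<theta> ^ j"
      using \<open>1 \<le> \<theta>\<close> by (simp add: powr_realpow)
    finally have "1 \<le> \<theta> ^ j / \<theta> powr c"
      using \<open>1 \<le> \<theta>\<close> by simp
    have "measure M (B j) = (l ^ j / fact j * exp (- l)) * 1"
      using True pmf by (simp add: B_def)
    also have "\<dots> \<le> (l ^ j / fact j * exp (- l)) * (\<theta> ^ j / \<theta> powr c)"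
      using \<open>0 \<le> l\<close> \<open>1 \<le> \<theta> ^ j / \<theta> powr c\<close> by (intro mult_left_mono) auto
    also have "\<dots> = (\<theta> * l) ^ j / fact j * (exp (- l) / \<theta> powr c)"
      by (simp add: power_mult_distrib)
    finally show ?thesis .
  next
    case False
    then show ?thesis
      using \<open>0 \<le> l\<close> \<open>1 \<le> \<theta>\<close> by (simp add: B_def)
  qed
  have "(\<lambda>j. (\<theta> * l) ^ j / fact j * (exp (- l) / \<theta> powr c)) sums (exp (\<theta> * l) * (exp (- l) / \<theta> powr c))"
    using exp_converges[of "\<theta> * l"] by (intro sums_mult2) (simp add: divide_inverse mult.commute)
  then have "measure M {\<omega>\<in>space M. c < real (X \<omega>)} \<le> exp (\<theta> * l) * (exp (- l) / \<theta> powr c)"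
    by (rule sums_le[OF B_le sums_B])
  also have "\<dots> = exp (l * (\<theta> - 1)) / \<theta> powr c"
    by (simp add: exp_add[symmetric] algebra_simps)
  finally show ?thesis .
qed

lemma AE_eventually_poisson_le:
  fixes X :: "nat \<Rightarrow> 'a \<Rightarrow> nat"
  assumes "prob_space M" and meas: "\<And>n. X n \<in> measurable M (count_space UNIV)"
    and pmf: "\<And>n k. measure M {\<omega>\<in>space M. X n \<omega> = k} = real n ^ k / fact k * exp (- real n)"
    and "1 < c"
  shows "AE \<omega> in M. eventually (\<lambda>n. real (X n \<omega>) \<le> c * real n) sequentially"
proof -
  interpret prob_space M by fact
  define A where "A n = {\<omega>\<in>space M. c * real n < real (X n \<omega>)}" for n
  have A_sets: "A n \<in> sets M" for n
  proof -
    have "X n -` {k. c * real n < real k} \<inter> space M \<in> sets M"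
      by (rule measurable_sets[OF meas]) simp
    then show ?thesis
      by (simp add: A_def vimage_def Int_def conj_commute)
  qed
  \<comment> \<open>any \<open>\<theta> \<in> (1, c)\<close> makes the Chernoff ratio \<open>r\<close> smaller than 1\<close>
  define \<theta> where "\<theta> = (1 + c) / 2"
  define r where "r = exp (\<theta> - 1) / \<theta> powr c"
  have \<theta>: "1 < \<theta>" "\<theta> < c"
    using \<open>1 < c\<close> by (auto simp: \<theta>_def)
  have r: "0 < r" "r < 1"
    using exp_less_powr[OF \<theta>] \<theta> by (auto simp: r_def)
  have "measure M (A n) \<le> exp (real n * (\<theta> - 1)) / \<theta> powr (c * real n)" for n
    unfolding A_def using \<theta> by (intro poisson_tail_bound meas pmf) (auto intro: prob_space_axioms)
  also have "exp (real n * (\<theta> - 1)) / \<theta> powr (c * real n) = r ^ n" for n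
    using \<theta> by (simp add: r_def powr_powr[symmetric] powr_realpow exp_of_nat_mult power_divide)
  finally have "measure M (A n) \<le> r ^ n" for n .
  then have "summable (\<lambda>n. measure M (A n))"
    using r by (intro summable_comparison_test[OF _ summable_geometric[of r]]) auto
  then have "AE \<omega> in M. eventually (\<lambda>n. \<omega> \<in> space M - A n) sequentially"
    using A_sets by (intro borel_cantelli_AE1) (auto simp: emeasure_eq_measure)
  then show ?thesis
    by eventually_elim (auto elim: eventually_mono simp: A_def not_less)
qed

lemma AE_all_gt_one_eventually_le:
  fixes X :: "nat \<Rightarrow> 'a \<Rightarrow> real"
  assumes "\<And>c. 1 < c \<Longrightarrow> AE \<omega> in M. eventually (\<lambda>n. X n \<omega> \<le> c * real n) sequentially"
  shows "AE \<omega> in M. \<forall>c>1. eventually (\<lambda>n. X n \<omega> \<le> c * real n) sequentially"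
proof -
  have "AE \<omega> in M. \<forall>j. eventually (\<lambda>n. X n \<omega> \<le> (1 + inverse (real (Suc j))) * real n) sequentially"
    unfolding AE_all_countable by (intro allI assms) simp
  then show ?thesis
  proof eventually_elim
    case (elim \<omega>)
    show ?case
    proof (intro allI impI)
      fix c :: real assume "1 < c"
      then obtain j where j: "inverse (real (Suc j)) < c - 1"
        using reals_Archimedean[of "c - 1"] by auto
      have le: "(1 + inverse (real (Suc j))) * real n \<le> c * real n" for n
        using j by (intro mult_right_mono) auto
      show "eventually (\<lambda>n. X n \<omega> \<le> c * real n) sequentially"
        using elim[rule_format, of j] by (rule eventually_mono) (use le in \<open>blast intro: order_trans\<close>)
    qed
  qed
qed

lemma eventually_le_mult_at_top_of_nat:
  fixes g :: "real \<Rightarrow> real"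
  assumes mono: "mono_on {0..} g"
    and seq: "\<And>c. 1 < c \<Longrightarrow> eventually (\<lambda>n. g (real n) \<le> c * real n) sequentially"
    and "1 < c"
  shows "eventually (\<lambda>t. g t \<le> c * t) at_top"
proof -
  define c' where "c' = (1 + c) / 2"
  have c': "1 < c'" "c' < c"
    using \<open>1 < c\<close> by (auto simp: c'_def)
  obtain K where K: "\<And>n. K \<le> n \<Longrightarrow> g (real n) \<le> c' * real n"
    using seq[OF c'(1)] unfolding eventually_sequentially by blast
  have "g t \<le> c * t" if "real K \<le> t" and t_large: "c' / (c - c') \<le> t" for t
  proof -
    define n where "n = nat \<lceil>t\<rceil>"
    have "0 < c' / (c - c')"
      using c' by simp
    then have "0 \<le> t"
      using t_large by linarith
    have n: "t \<le> real n" "real n \<le> t + 1"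
      unfolding n_def using \<open>0 \<le> t\<close> by linarith+
    have "g t \<le> g (real n)"
      using mono \<open>0 \<le> t\<close> n by (auto intro: mono_onD)
    also have "\<dots> \<le> c' * real n"
      using \<open>real K \<le> t\<close> n by (intro K) linarith
    also have "\<dots> \<le> c' * (t + 1)"
      using n c' by (intro mult_left_mono) auto
    also have "\<dots> \<le> c * t"
    proof -
      have "c' \<le> (c - c') * t"
        using t_large c' by (simp add: pos_divide_le_eq mult.commute)
      then show ?thesis
        by (simp add: algebra_simps)
    qed
    finally show ?thesis .
  qed
  then show ?thesis
    by (intro eventually_at_top_linorderI[of "max (real K) (c' / (c - c'))"]) auto
qed

lemma Limsup_ratio_le_card:
  fixes f :: "real \<Rightarrow> real" and g :: "'v \<Rightarrow> real \<Rightarrow> real"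
  assumes "finite K"
    and f_le: "eventually (\<lambda>t. f t \<le> 1 + (\<Sum>v\<in>K. g v t)) at_top"
    and g_le: "\<And>v c. v \<in> K \<Longrightarrow> 1 < c \<Longrightarrow> eventually (\<lambda>t. g v t \<le> c * t) at_top"
  shows "Limsup at_top (\<lambda>t. ereal (f t / t)) \<le> card K"
proof (rule ereal_le_epsilon2)
  fix \<delta> :: real assume "0 < \<delta>"
  define k where "k = real (card K)"
  define c where "c = 1 + \<delta> / (2 * (k + 1))"
  have "0 \<le> k"
    by (simp add: k_def)
  then have "1 < c"
    using \<open>0 < \<delta>\<close> by (simp add: c_def)
  have "eventually (\<lambda>t. \<forall>v\<in>K. g v t \<le> c * t) at_top"
    using \<open>finite K\<close> g_le \<open>1 < c\<close> by (intro eventually_ball_finite) auto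
  then have "eventually (\<lambda>t. ereal (f t / t) \<le> ereal (k + \<delta>)) at_top"
    using f_le eventually_ge_at_top[of "2 / \<delta>"]
  proof eventually_elim
    case (elim t)
    have "0 < 2 / \<delta>"
      using \<open>0 < \<delta>\<close> by simp
    then have "0 < t"
      using elim(3) by linarith
    have "1 \<le> \<delta> / 2 * t"
      using elim(3) \<open>0 < \<delta>\<close> by (simp add: field_simps)
    have "f t \<le> 1 + (\<Sum>v\<in>K. c * t)"
      using elim(1,2) sum_mono[of K "\<lambda>v. g v t" "\<lambda>v. c * t"] by auto
    also have "\<dots> = 1 + k * t + k / (k + 1) * (\<delta> / 2) * t"
      using \<open>0 \<le> k\<close> by (simp add: k_def c_def field_simps)
    also have "\<dots> \<le> \<delta> / 2 * t + k * t + 1 * (\<delta> / 2) * t"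
      using \<open>0 \<le> k\<close> \<open>0 < t\<close> \<open>0 < \<delta>\<close> \<open>1 \<le> \<delta> / 2 * t\<close>
      by (intro add_mono mult_right_mono) auto
    also have "\<dots> = (k + \<delta>) * t"
      by (simp add: algebra_simps)
    finally show ?case
      using \<open>0 < t\<close> by (simp add: divide_le_eq)
  qed
  then have "Limsup at_top (\<lambda>t. ereal (f t / t)) \<le> ereal (k + \<delta>)"
    by (rule Limsup_bounded)
  then show "Limsup at_top (\<lambda>t. ereal (f t / t)) \<le> card K + ereal \<delta>"
    by (simp add: k_def)
qed

lemma iid_poisson_point_processesD:
  assumes "iid_poisson_point_processes M V P" and "v \<in> V"
  shows "prob_space M"
    and "\<And>\<omega>. \<omega> \<in> space M \<Longrightarrow> P v \<omega> \<subseteq> ppp_region"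
    and "\<And>A. admissible_set A \<Longrightarrow> AE \<omega> in M. finite (P v \<omega> \<inter> A)"
    and "\<And>A. admissible_set A \<Longrightarrow> (\<lambda>\<omega>. card (P v \<omega> \<inter> A)) \<in> measurable M (count_space UNIV)"
    and "\<And>A k. admissible_set A \<Longrightarrow> measure M {\<omega>\<in>space M. card (P v \<omega> \<inter> A) = k}
           = measure lborel A ^ k / fact k * exp (- measure lborel A)"
  using assms unfolding iid_poisson_point_processes_def by blast+

lemma AE_finite_atoms_time_strip:
  assumes "iid_poisson_point_processes M V P" and "v \<in> V"
  shows "AE \<omega> in M. \<forall>t\<ge>0. finite (P v \<omega> \<inter> time_strip t)"
proof -
  have "AE \<omega> in M. \<forall>n::nat. finite (P v \<omega> \<inter> time_strip (real n))"
    unfolding AE_all_countable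
    by (intro allI iid_poisson_point_processesD(3)[OF assms] admissible_time_strip) simp
  then show ?thesis
  proof eventually_elim
    case (elim \<omega>)
    show ?case
    proof (intro allI impI)
      fix t :: real
      have "P v \<omega> \<inter> time_strip t \<subseteq> P v \<omega> \<inter> time_strip (real (nat \<lceil>t\<rceil>))"
        using time_strip_mono[OF real_nat_ceiling_ge] by blast
      then show "finite (P v \<omega> \<inter> time_strip t)"
        using elim finite_subset by blast
    qed
  qed
qed

lemma AE_atom_count_sublinear:
  assumes "iid_poisson_point_processes M V P" and "v \<in> V"
  shows "AE \<omega> in M. \<forall>c>1. eventually (\<lambda>t. real (card (P v \<omega> \<inter> time_strip t)) \<le> c * t) at_top"
proof -
  note iid = iid_poisson_point_processesD[OF assms]
  have "AE \<omega> in M. \<forall>c>1. eventually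
      (\<lambda>n. real (card (P v \<omega> \<inter> time_strip (real n))) \<le> c * real n) sequentially"
  proof (intro AE_all_gt_one_eventually_le AE_eventually_poisson_le iid(1))
    fix n k :: nat
    show "(\<lambda>\<omega>. card (P v \<omega> \<inter> time_strip (real n))) \<in> measurable M (count_space UNIV)"
      by (intro iid admissible_time_strip) simp
    show "measure M {\<omega>\<in>space M. card (P v \<omega> \<inter> time_strip (real n)) = k}
        = real n ^ k / fact k * exp (- real n)"
      using iid(5)[OF admissible_time_strip(1)] admissible_time_strip(2)[of "real n"] by simp
  qed
  with AE_finite_atoms_time_strip[OF assms] show ?thesis
  proof eventually_elim
    case (elim \<omega>)
    have "mono_on {0..} (\<lambda>t. real (card (P v \<omega> \<inter> time_strip t)))"
    proof (rule mono_onI)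
      fix r s :: real assume "r \<in> {0..}" "s \<in> {0..}" "r \<le> s"
      then show "real (card (P v \<omega> \<inter> time_strip r)) \<le> real (card (P v \<omega> \<inter> time_strip s))"
        using elim(1) time_strip_mono[of r s] by (auto intro!: card_mono)
    qed
    then show ?case
      using elim(2) by (intro allI impI eventually_le_mult_at_top_of_nat) auto
  qed
qed

lemma card_reinforcing_atoms_le:
  fixes Q :: "'v \<Rightarrow> (real \<times> real) set"
  assumes "finite e"
    and region: "\<And>v. v \<in> e \<Longrightarrow> Q v \<subseteq> ppp_region"
    and fin: "\<And>v. v \<in> e \<Longrightarrow> finite (Q v \<inter> time_strip t)"
  shows "card {(v, s, u). v \<in> e \<and> (s, u) \<in> Q v \<and> 0 < s \<and> s \<le> t \<and> R v s u}
    \<le> (\<Sum>v\<in>e. card (Q v \<inter> time_strip t))"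
proof -
  have "{(v, s, u). v \<in> e \<and> (s, u) \<in> Q v \<and> 0 < s \<and> s \<le> t \<and> R v s u}
      \<subseteq> (SIGMA v:e. Q v \<inter> time_strip t)"
    using region by (fastforce simp: time_strip_def ppp_region_def)
  then have "card {(v, s, u). v \<in> e \<and> (s, u) \<in> Q v \<and> 0 < s \<and> s \<le> t \<and> R v s u}
      \<le> card (SIGMA v:e. Q v \<inter> time_strip t)"
    using assms by (intro card_mono) auto
  also have "\<dots> = (\<Sum>v\<in>e. card (Q v \<inter> time_strip t))"
    using assms by simp
  finally show ?thesis .
qed

lemma countable_graph_bounded_degree_edgeD:
  assumes "countable_graph_bounded_degree V E" and "e \<in> E"
  shows "e \<subseteq> V" and "card e = 2" and "finite e"
proof -
  show "e \<subseteq> V" "card e = 2"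
    using assms unfolding countable_graph_bounded_degree_def by blast+
  then show "finite e"
    using card.infinite by fastforce
qed

lemma AE_weight_le_atom_count:
  assumes "countable_graph_bounded_degree V E" and "iid_poisson_point_processes M V P"
    and "wrpu_process M \<alpha> E enum P N" and "e \<in> E"
  shows "AE \<omega> in M. \<forall>t\<ge>0. N t e \<omega> \<le> 1 + (\<Sum>v\<in>e. card (P v \<omega> \<inter> time_strip t))"
proof -
  note e = countable_graph_bounded_degree_edgeD[OF assms(1,4)]
  have "AE \<omega> in M. \<forall>v\<in>e. \<forall>t\<ge>0. finite (P v \<omega> \<inter> time_strip t)"
    using e by (intro AE_finite_allI[OF e(3)] AE_finite_atoms_time_strip[OF assms(2)]) auto
  with AE_space assms(3) show ?thesis
    unfolding wrpu_process_def
  proof eventually_elim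
    case (elim \<omega>)
    show ?case
    proof (intro allI impI)
      fix t :: real assume "0 \<le> t"
      have "N t e \<omega> = 1 + card {(v, s, u). v \<in> e \<and> (s, u) \<in> P v \<omega> \<and> 0 < s \<and> s \<le> t \<and>
          u \<in> sel_interval \<alpha> E enum (\<lambda>e'. Lim (at_left s) (\<lambda>r. N r e' \<omega>)) v e}"
        (is "_ = 1 + card ?reinforcing")
        using elim(2) \<open>0 \<le> t\<close> assms(4) by blast
      moreover have "card ?reinforcing \<le> (\<Sum>v\<in>e. card (P v \<omega> \<inter> time_strip t))"
        using elim(1,3) e(1) \<open>0 \<le> t\<close>
        by (intro card_reinforcing_atoms_le[OF e(3)] iid_poisson_point_processesD(2)[OF assms(2)]) auto
      ultimately show "N t e \<omega> \<le> 1 + (\<Sum>v\<in>e. card (P v \<omega> \<inter> time_strip t))"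
        by linarith
    qed
  qed
qed

theorem mainTheorem3:
  fixes M :: "'a measure" and V :: "'v set" and E :: "'v set set"
    and \<alpha> :: real and enum :: "'v \<Rightarrow> nat \<Rightarrow> 'v set"
    and P :: "'v \<Rightarrow> 'a \<Rightarrow> (real \<times> real) set"
    and N :: "real \<Rightarrow> 'v set \<Rightarrow> 'a \<Rightarrow> nat"
  assumes "countable_graph_bounded_degree V E"
    and "0 \<le> \<alpha>" and "\<alpha> < 1"
    and "edge_enumeration V E enum"
    and "iid_poisson_point_processes M V P"
    and "wrpu_process M \<alpha> E enum P N"
    and "e \<in> E"
  shows "AE \<omega> in M. Limsup at_top (\<lambda>t. ereal (real (N t e \<omega>) / t)) \<le> 2"
proof -
  note e = countable_graph_bounded_degree_edgeD[OF assms(1,7)]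
  have "AE \<omega> in M. \<forall>v\<in>e. \<forall>c>1. eventually (\<lambda>t. real (card (P v \<omega> \<inter> time_strip t)) \<le> c * t) at_top"
    using e by (intro AE_finite_allI[OF e(3)] AE_atom_count_sublinear[OF assms(5)]) auto
  with AE_weight_le_atom_count[OF assms(1,5,6,7)] show ?thesis
  proof eventually_elim
    case (elim \<omega>)
    have "eventually (\<lambda>t. real (N t e \<omega>) \<le> 1 + (\<Sum>v\<in>e. real (card (P v \<omega> \<inter> time_strip t)))) at_top"
      using eventually_ge_at_top[of 0]
      by eventually_elim (metis elim(1) of_nat_1 of_nat_add of_nat_le_iff of_nat_sum)
    then have "Limsup at_top (\<lambda>t. ereal (real (N t e \<omega>) / t)) \<le> card e"
      using elim(2) by (intro Limsup_ratio_le_card[OF e(3)]) auto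
    then show ?case
      using e(2) by simp
  qed
qed

end
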